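(* There is an absolute constant $K$ such that for every finite program $\Omega$ with weight constraints in which all weights $w_i$ are integers, the number of weight atoms (atoms of the forms $q_{w\le S}$, $q_{w<S}$) occurring in $[\Omega]^{nn}$ is at most $K\sum_C (L(C)+1)(W(C)+1)$, the sum ranging over all weight constraints $C$ occurring in $\Omega$; in the paper's notation, this number is $O\big(\sum_C L(C)\cdot W(C)\big)$.
   Context: A rule element is a literal $l$ or $\mathit{not}\ l$ (literals are atoms or classically negated atoms $\neg a$). A weight constraint $C$ is $L\le\{c_1=w_1,\dots,c_m=w_m\}\le U$ with $L,U$ reals or $\pm\infty$, rule elements $c_i$ ($m\ge0$), nonnegative real weights $w_i$; its length is $L(C)=m$ and its weight is $W(C)=w_1+\dots+w_m$. A rule with weight constraints is $C_0\leftarrow C_1,\dots,C_n$; the rule elements of $C_0$ are its positive/negative head elements; a program with weight constraints is a set of such rules. Nonnested translation. For each literal $l$ there is a new atom $q_{\mathit{not}\,l}$, and for each value $w$ and each expression $S=\{c_1=w_1,\dots,c_m=w_m\}$ new atoms $q_{w\le S}$ and $q_{w<S}$ (weight atoms). For $m>0$, $S'=\{c_1=w_1,\dots,c_{m-1}=w_{m-1}\}$. A program $\Pi$ (set of rules $\mathit{Head}\leftarrow\mathit{Body}$, heads literals or $\bot$, bodies conjunctions of literals possibly prefixed by $\mathit{not}$) is closed if: for each atom $q_{w\le S}$ occurring in $\Pi$, $\Pi$ contains the fact $q_{w\le S}$ if $w\le0$, and the rules $q_{w\le S}\leftarrow q_{w\le S'}$ and $q_{w\le S}\leftarrow c_m,q_{w-w_m\le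 S'}$ if $0<w\le w_1+\dots+w_m$; for each atom $q_{w<S}$ occurring in $\Pi$, $\Pi$ contains the fact $q_{w<S}$ if $w<0$, and the rules $q_{w<S}\leftarrow q_{w<S'}$ and $q_{w<S}\leftarrow c_m,q_{w-w_m<S'}$ if $0\le w<w_1+\dots+w_m$. $[L\le S\le U]^{nn}$ is the conjunction $q_{L\le S},\mathit{not}\,q_{U<S}$. $[\Omega]^{nn}$ is the smallest closed program containing, for every rule $L_0\le S_0\le U_0\leftarrow C_1,\dots,C_n$ of $\Omega$ and each of its positive head elements $l$, the rules $q_{\mathit{not}\,l}\leftarrow\mathit{not}\,l$ and $l\leftarrow\mathit{not}\,q_{\mathit{not}\,l},[C_1]^{nn},\dots,[C_n]^{nn}$, and the rules $\bot\leftarrow\mathit{not}\,q_{L_0\le S_0},[C_1]^{nn},\dots,[C_n]^{nn}$ and $\bot\leftarrow q_{U_0<S_0},[C_1]^{nn},\dots,[C_n]^{nn}$. *)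

theory Defs
  imports Complex_Main "HOL-Library.Extended_Real"
begin

text \<open>Literals: atoms or classically negated atoms.\<close>
datatype 'a lit = Pos 'a | Neg 'a

text \<open>Rule elements: a literal l or not l.\<close>
datatype 'a elem = Lit "'a lit" | NotL "'a lit"

text \<open>An expression S = {c_1=w_1,...,c_m=w_m}, as an ordered list (the order
  matters for S').\<close>
type_synonym 'a wexpr = "('a elem \<times> real) list"

datatype 'a wc = WC ereal "'a wexpr" ereal

fun wc_expr :: "'a wc \<Rightarrow> 'a wexpr" where
  "wc_expr (WC L S U) = S"

definition expr_weight :: "'a wexpr \<Rightarrow> real" where
  "expr_weight S = sum_list (map snd S)"

definition wc_length :: "'a wc \<Rightarrow> nat" where
  "wc_length C = length (wc_expr C)"

definition wc_weight :: "'a wc \<Rightarrow> real" where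
  "wc_weight C = expr_weight (wc_expr C)"

type_synonym 'a wrule = "'a wc \<times> 'a wc list"

definition constraints_of :: "'a wrule set \<Rightarrow> 'a wc set" where
  "constraints_of \<Omega> = (\<Union>(C0, B) \<in> \<Omega>. insert C0 (set B))"

definition integer_weights :: "'a wrule set \<Rightarrow> bool" where
  "integer_weights \<Omega> \<longleftrightarrow>
     (\<forall>C \<in> constraints_of \<Omega>. \<forall>(c, w) \<in> set (wc_expr C). 0 \<le> w \<and> w \<in> \<int>)"

text \<open>Atoms of the translation: original atoms, q_{not l}, and weight atoms
  q_{w<=S}, q_{w<S}.\<close>
datatype 'a natom = Orig 'a | QNot "'a lit" | QLe ereal "'a wexpr" | QLt ereal "'a wexpr"

text \<open>Nonnested rule: head is a literal or bottom (None), body a list of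
  literals possibly prefixed by not.\<close>
type_synonym 'a nrule = "'a natom lit option \<times> 'a natom elem list"

fun lit_atom :: "'b lit \<Rightarrow> 'b" where
  "lit_atom (Pos a) = a" | "lit_atom (Neg a) = a"

fun elem_atom :: "'b elem \<Rightarrow> 'b" where
  "elem_atom (Lit l) = lit_atom l" | "elem_atom (NotL l) = lit_atom l"

definition natoms :: "'a nrule \<Rightarrow> 'a natom set" where
  "natoms r = (case fst r of None \<Rightarrow> {} | Some l \<Rightarrow> {lit_atom l})
              \<union> elem_atom ` set (snd r)"

definition lift_lit :: "'a lit \<Rightarrow> 'a natom lit" where
  "lift_lit l = map_lit Orig l"

definition lift_elem :: "'a elem \<Rightarrow> 'a natom elem" where
  "lift_elem c = map_elem Orig c"

fun tr_wc :: "'a wc \<Rightarrow> 'a natom elem list" where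
  "tr_wc (WC L S U) = [Lit (Pos (QLe L S)), NotL (Pos (QLt U S))]"

definition tr_body :: "'a wc list \<Rightarrow> 'a natom elem list" where
  "tr_body B = concat (map tr_wc B)"

fun is_weight_atom :: "'a natom \<Rightarrow> bool" where
  "is_weight_atom (QLe w S) = True"
| "is_weight_atom (QLt w S) = True"
| "is_weight_atom _ = False"

inductive_set nn :: "'a wrule set \<Rightarrow> 'a nrule set" for \<Omega> :: "'a wrule set" where
  head_qnot: "(WC L0 S0 U0, B) \<in> \<Omega> \<Longrightarrow> (Lit l, w) \<in> set S0 \<Longrightarrow>
     (Some (Pos (QNot l)), [NotL (lift_lit l)]) \<in> nn \<Omega>"
| head_lit: "(WC L0 S0 U0, B) \<in> \<Omega> \<Longrightarrow> (Lit l, w) \<in> set S0 \<Longrightarrow>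
     (Some (lift_lit l), NotL (Pos (QNot l)) # tr_body B) \<in> nn \<Omega>"
| lower: "(WC L0 S0 U0, B) \<in> \<Omega> \<Longrightarrow>
     (None, NotL (Pos (QLe L0 S0)) # tr_body B) \<in> nn \<Omega>"
| upper: "(WC L0 S0 U0, B) \<in> \<Omega> \<Longrightarrow>
     (None, Lit (Pos (QLt U0 S0)) # tr_body B) \<in> nn \<Omega>"
| le_fact: "r \<in> nn \<Omega> \<Longrightarrow> QLe w S \<in> natoms r \<Longrightarrow> w \<le> 0 \<Longrightarrow>
     (Some (Pos (QLe w S)), []) \<in> nn \<Omega>"
| le_rule1: "r \<in> nn \<Omega> \<Longrightarrow> QLe w S \<in> natoms r \<Longrightarrow> 0 < w \<Longrightarrow> w \<le> ereal (expr_weight S) \<Longrightarrow>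
     (Some (Pos (QLe w S)), [Lit (Pos (QLe w (butlast S)))]) \<in> nn \<Omega>"
| le_rule2: "r \<in> nn \<Omega> \<Longrightarrow> QLe w S \<in> natoms r \<Longrightarrow> 0 < w \<Longrightarrow> w \<le> ereal (expr_weight S) \<Longrightarrow>
     (Some (Pos (QLe w S)),
        [lift_elem (fst (last S)), Lit (Pos (QLe (w - ereal (snd (last S))) (butlast S)))]) \<in> nn \<Omega>"
| lt_fact: "r \<in> nn \<Omega> \<Longrightarrow> QLt w S \<in> natoms r \<Longrightarrow> w < 0 \<Longrightarrow>
     (Some (Pos (QLt w S)), []) \<in> nn \<Omega>"
| lt_rule1: "r \<in> nn \<Omega> \<Longrightarrow> QLt w S \<in> natoms r \<Longrightarrow> 0 \<le> w \<Longrightarrow> w < ereal (expr_weight S) \<Longrightarrow>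
     (Some (Pos (QLt w S)), [Lit (Pos (QLt w (butlast S)))]) \<in> nn \<Omega>"
| lt_rule2: "r \<in> nn \<Omega> \<Longrightarrow> QLt w S \<in> natoms r \<Longrightarrow> 0 \<le> w \<Longrightarrow> w < ereal (expr_weight S) \<Longrightarrow>
     (Some (Pos (QLt w S)),
        [lift_elem (fst (last S)), Lit (Pos (QLt (w - ereal (snd (last S))) (butlast S)))]) \<in> nn \<Omega>"

definition weight_atoms_nn :: "'a wrule set \<Rightarrow> 'a natom set" where
  "weight_atoms_nn \<Omega> = {a. \<exists>r \<in> nn \<Omega>. a \<in> natoms r \<and> is_weight_atom a}"

end

theory Submission
  imports Defs
begin

text \<open>Every weight atom of \<open>[\<Omega>]\<^sup>n\<^sup>n\<close> is \<open>q\<^bsub>X-j\<le>S\<^sub>k\<^esub>\<close> or \<open>q\<^bsub>X-j<S\<^sub>k\<^esub>\<close>, where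
  \<open>S\<close> is the expression of a constraint \<open>L \<le> S \<le> U\<close> of \<open>\<Omega>\<close>, \<open>X\<close> is \<open>L\<close> or \<open>U\<close>, \<open>S\<^sub>k\<close> is a
  prefix of \<open>S\<close>, and \<open>j\<close> is a natural number not exceeding the weight of the dropped
  suffix. The atoms occurring in \<open>\<Omega>\<close> have this form with \<open>j = 0\<close>, and the closure rules only
  drop the last element and possibly subtract its weight, which is a natural number by
  integrality. For each bound there are at most \<open>(L(C) + 1)(W(C) + 1)\<close> choices of \<open>(j, k)\<close>,
  so \<open>K = 2\<close> works.\<close>

lemma expr_weight_Nil [simp]: "expr_weight [] = 0"
  by (simp add: expr_weight_def)

lemma expr_weight_Cons [simp]: "expr_weight (c # S) = snd c + expr_weight S"
  by (simp add: expr_weight_def)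

lemma expr_weight_append: "expr_weight (S @ T) = expr_weight S + expr_weight T"
  by (simp add: expr_weight_def)

lemma expr_weight_nonneg: "\<forall>p \<in> set S. 0 \<le> snd p \<Longrightarrow> 0 \<le> expr_weight S"
  unfolding expr_weight_def by (rule sum_list_nonneg) auto

lemma expr_weight_drop_le:
  assumes "\<forall>p \<in> set S. 0 \<le> snd p"
  shows "expr_weight (drop k S) \<le> expr_weight S"
proof -
  have "0 \<le> expr_weight (take k S)"
    using assms by (intro expr_weight_nonneg) (auto dest: in_set_takeD)
  then show ?thesis
    using expr_weight_append[of "take k S" "drop k S"] by simp
qed

definition prefix_bounds :: "ereal \<Rightarrow> 'a wexpr \<Rightarrow> (ereal \<times> 'a wexpr) set" where
  "prefix_bounds X S =
     {(X - ereal (real j), take k S) | j k. k \<le> length S \<and> real j \<le> expr_weight (drop k S)}"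

lemma self_mem_prefix_bounds: "(X, S) \<in> prefix_bounds X S"
  unfolding prefix_bounds_def by (rule CollectI, rule exI[of _ 0], rule exI[of _ "length S"]) simp

lemma prefix_bounds_butlast:
  assumes nat_weights: "snd ` set S \<subseteq> \<nat>"
    and mem: "(w, T) \<in> prefix_bounds X S" and "T \<noteq> []"
  shows "(w, butlast T) \<in> prefix_bounds X S"
    and "(w - ereal (snd (last T)), butlast T) \<in> prefix_bounds X S"
proof -
  from mem obtain j k where w: "w = X - ereal (real j)" and T: "T = take k S"
    and "k \<le> length S" and j: "real j \<le> expr_weight (drop k S)"
    unfolding prefix_bounds_def by blast
  with \<open>T \<noteq> []\<close> obtain i where k: "k = Suc i" and "i < length S"
    by (cases k) auto
  then have T_snoc: "T = take i S @ [S ! i]"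
    using T by (simp add: take_Suc_conv_app_nth)
  from \<open>i < length S\<close> nat_weights obtain n where n: "snd (S ! i) = real n"
    by (metis Nats_cases image_subset_iff nth_mem)
  have drop_i: "expr_weight (drop i S) = real n + expr_weight (drop k S)"
    using \<open>i < length S\<close> n k by (simp add: Cons_nth_drop_Suc[symmetric])
  show "(w, butlast T) \<in> prefix_bounds X S"
    unfolding prefix_bounds_def
    by (rule CollectI, rule exI[of _ j], rule exI[of _ i])
      (use w T_snoc j drop_i \<open>i < length S\<close> in auto)
  have shifted: "w - ereal (snd (last T)) = X - ereal (real (j + n))"
    using w T_snoc n by (cases X) auto
  show "(w - ereal (snd (last T)), butlast T) \<in> prefix_bounds X S"
    unfolding prefix_bounds_def
    by (rule CollectI, rule exI[of _ "j + n"], rule exI[of _ i])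
      (use shifted T_snoc j drop_i \<open>i < length S\<close> in auto)
qed

lemma prefix_bounds_subset_image:
  assumes "\<forall>p \<in> set S. 0 \<le> snd p"
  shows "prefix_bounds X S \<subseteq> (\<lambda>(j, k). (X - ereal (real j), take k S)) `
           ({..nat \<lfloor>expr_weight S\<rfloor>} \<times> {..length S})"
proof
  fix x assume "x \<in> prefix_bounds X S"
  then obtain j k where x: "x = (X - ereal (real j), take k S)" and "k \<le> length S"
    and "real j \<le> expr_weight (drop k S)"
    unfolding prefix_bounds_def by blast
  moreover from this have "j \<le> nat \<lfloor>expr_weight S\<rfloor>"
    using expr_weight_drop_le[OF assms, of k] by linarith
  ultimately show "x \<in> (\<lambda>(j, k). (X - ereal (real j), take k S)) `
                     ({..nat \<lfloor>expr_weight S\<rfloor>} \<times> {..length S})"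
    by force
qed

lemma finite_prefix_bounds:
  assumes "\<forall>p \<in> set S. 0 \<le> snd p"
  shows "finite (prefix_bounds X S)"
  using finite_subset[OF prefix_bounds_subset_image[OF assms]] by blast

lemma card_prefix_bounds_le:
  assumes nonneg: "\<forall>p \<in> set S. 0 \<le> snd p"
  shows "real (card (prefix_bounds X S)) \<le> (real (length S) + 1) * (expr_weight S + 1)"
proof -
  let ?A = "{..nat \<lfloor>expr_weight S\<rfloor>} \<times> {..length S}"
  have "card (prefix_bounds X S) \<le> card ?A"
    using card_mono[OF _ prefix_bounds_subset_image[OF nonneg, of X]]
      card_image_le[of ?A "\<lambda>(j, k). (X - ereal (real j), take k S)"]
    by (meson finite_SigmaI finite_atMost finite_imageI order_trans)
  also have "card ?A = (nat \<lfloor>expr_weight S\<rfloor> + 1) * (length S + 1)"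
    by (simp add: card_cartesian_product)
  finally have "real (card (prefix_bounds X S))
                  \<le> real ((nat \<lfloor>expr_weight S\<rfloor> + 1) * (length S + 1))"
    by (simp only: of_nat_le_iff)
  also have "\<dots> = (real (nat \<lfloor>expr_weight S\<rfloor>) + 1) * (real (length S) + 1)"
    by (simp add: algebra_simps)
  also have "\<dots> \<le> (expr_weight S + 1) * (real (length S) + 1)"
    using expr_weight_nonneg[OF nonneg] by (intro mult_right_mono) linarith+
  finally show ?thesis
    by (simp only: mult.commute)
qed

fun wc_weight_atoms :: "'a wc \<Rightarrow> 'a natom set" where
  "wc_weight_atoms (WC L S U) = case_prod QLe ` prefix_bounds L S \<union> case_prod QLt ` prefix_bounds U S"

lemma QLe_mem_wc_weight_atoms [simp]:
  "QLe w T \<in> wc_weight_atoms (WC L S U) \<longleftrightarrow> (w, T) \<in> prefix_bounds L S"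
  by auto

lemma QLt_mem_wc_weight_atoms [simp]:
  "QLt w T \<in> wc_weight_atoms (WC L S U) \<longleftrightarrow> (w, T) \<in> prefix_bounds U S"
  by auto

lemma card_wc_weight_atoms_le:
  assumes nonneg: "\<forall>p \<in> set (wc_expr C). 0 \<le> snd p"
  shows "finite (wc_weight_atoms C)"
    and "real (card (wc_weight_atoms C)) \<le> 2 * ((real (wc_length C) + 1) * (wc_weight C + 1))"
proof -
  obtain L S U where C: "C = WC L S U" by (cases C)
  with nonneg have nonneg_S: "\<forall>p \<in> set S. 0 \<le> snd p" by simp
  show "finite (wc_weight_atoms C)"
    using C finite_prefix_bounds[OF nonneg_S] by simp
  have "card (wc_weight_atoms C)
          \<le> card (case_prod QLe ` prefix_bounds L S) + card (case_prod QLt ` prefix_bounds U S)"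
    using C card_Un_le by simp
  also have "\<dots> \<le> card (prefix_bounds L S) + card (prefix_bounds U S)"
    by (intro add_mono card_image_le finite_prefix_bounds nonneg_S)
  finally have "real (card (wc_weight_atoms C))
                  \<le> real (card (prefix_bounds L S)) + real (card (prefix_bounds U S))"
    by linarith
  then show "real (card (wc_weight_atoms C)) \<le> 2 * ((real (wc_length C) + 1) * (wc_weight C + 1))"
    using C card_prefix_bounds_le[OF nonneg_S, of L] card_prefix_bounds_le[OF nonneg_S, of U]
    by (simp add: wc_length_def wc_weight_def)
qed

lemma integer_weights_Nats:
  assumes "integer_weights \<Omega>" "C \<in> constraints_of \<Omega>"
  shows "snd ` set (wc_expr C) \<subseteq> \<nat>"
  using assms unfolding integer_weights_def Nats_altdef2 by fastforce

lemma lift_lit_atom: "lit_atom (lift_lit l) = Orig (lit_atom l)"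
  by (cases l) (simp_all add: lift_lit_def)

lemma lift_elem_atom: "elem_atom (lift_elem c) = Orig (elem_atom c)"
  by (cases c) (simp_all add: lift_elem_def lift_lit_atom[unfolded lift_lit_def])

lemma constraints_of_rule:
  "(C\<^sub>0, B) \<in> \<Omega> \<Longrightarrow> set (C\<^sub>0 # B) \<subseteq> constraints_of \<Omega>"
  unfolding constraints_of_def by fastforce

definition admissible_weight_atoms :: "'a wrule set \<Rightarrow> 'a natom set" where
  "admissible_weight_atoms \<Omega> = (\<Union>C \<in> constraints_of \<Omega>. wc_weight_atoms C)"

lemma tr_wc_atoms_subset: "elem_atom ` set (tr_wc C) \<subseteq> wc_weight_atoms C"
  by (cases C) (auto intro: self_mem_prefix_bounds)

lemma tr_body_atoms_subset:
  "set B \<subseteq> constraints_of \<Omega> \<Longrightarrow>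
     elem_atom ` set (tr_body B) \<subseteq> admissible_weight_atoms \<Omega>"
  using tr_wc_atoms_subset unfolding tr_body_def admissible_weight_atoms_def by fastforce

lemma weight_atoms_closed:
  assumes "integer_weights \<Omega>" "Q = QLe \<or> Q = QLt" "T \<noteq> []"
    and "Q w T \<in> admissible_weight_atoms \<Omega>"
  shows "Q w (butlast T) \<in> admissible_weight_atoms \<Omega>"
    and "Q (w - ereal (snd (last T))) (butlast T) \<in> admissible_weight_atoms \<Omega>"
proof -
  from assms(4) obtain L S U where C: "WC L S U \<in> constraints_of \<Omega>"
    and "Q w T \<in> wc_weight_atoms (WC L S U)"
    unfolding admissible_weight_atoms_def by (metis UN_E wc_weight_atoms.cases)
  then obtain X where mem: "(w, T) \<in> prefix_bounds X S"
    and Q_X: "\<And>v T'. (v, T') \<in> prefix_bounds X S \<Longrightarrow> Q v T' \<in> wc_weight_atoms (WC L S U)"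
    using assms(2) by auto
  have "snd ` set S \<subseteq> \<nat>"
    using integer_weights_Nats[OF assms(1) C] by simp
  note shorter = prefix_bounds_butlast[OF this mem \<open>T \<noteq> []\<close>]
  show "Q w (butlast T) \<in> admissible_weight_atoms \<Omega>"
    and "Q (w - ereal (snd (last T))) (butlast T) \<in> admissible_weight_atoms \<Omega>"
    unfolding admissible_weight_atoms_def by (intro UN_I[OF C] Q_X shorter)+
qed

lemma weight_atoms_nn_subset:
  assumes integer: "integer_weights \<Omega>"
  shows "weight_atoms_nn \<Omega> \<subseteq> admissible_weight_atoms \<Omega>"
proof -
  have "a \<in> admissible_weight_atoms \<Omega>"
    if "r \<in> nn \<Omega>" "a \<in> natoms r" "is_weight_atom a" for r a
    using that
  proof (induction r arbitrary: a rule: nn.induct)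
    case (head_qnot L0 S0 U0 B l w)
    then show ?case by (auto simp: natoms_def lift_lit_atom)
  next
    case (head_lit L0 S0 U0 B l w)
    have "set B \<subseteq> constraints_of \<Omega>"
      using constraints_of_rule[OF head_lit.hyps(1)] by simp
    moreover have "a \<in> elem_atom ` set (tr_body B)"
      using head_lit.prems by (auto simp: natoms_def lift_lit_atom)
    ultimately show ?case
      by (rule subsetD[OF tr_body_atoms_subset])
  next
    case (lower L0 S0 U0 B)
    then have "a \<in> elem_atom ` set (tr_body (WC L0 S0 U0 # B))"
      by (auto simp: natoms_def tr_body_def)
    then show ?case
      by (rule subsetD[OF tr_body_atoms_subset[OF constraints_of_rule[OF lower.hyps]]])
  next
    case (upper L0 S0 U0 B)
    then have "a \<in> elem_atom ` set (tr_body (WC L0 S0 U0 # B))"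
      by (auto simp: natoms_def tr_body_def)
    then show ?case
      by (rule subsetD[OF tr_body_atoms_subset[OF constraints_of_rule[OF upper.hyps]]])
  next
    case (le_fact r w S)
    then show ?case by (simp add: natoms_def)
  next
    case (le_rule1 r w S)
    then have "S \<noteq> []" "QLe w S \<in> admissible_weight_atoms \<Omega>"
      by (auto simp flip: zero_ereal_def)
    with le_rule1.prems weight_atoms_closed[OF integer disjI1[OF refl]] show ?case
      by (auto simp: natoms_def)
  next
    case (le_rule2 r w S)
    then have "S \<noteq> []" "QLe w S \<in> admissible_weight_atoms \<Omega>"
      by (auto simp flip: zero_ereal_def)
    with le_rule2.prems weight_atoms_closed[OF integer disjI1[OF refl]] show ?case
      by (auto simp: natoms_def lift_elem_atom)
  next
    case (lt_fact r w S)
    then show ?case by (simp add: natoms_def)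
  next
    case (lt_rule1 r w S)
    then have "S \<noteq> []" "QLt w S \<in> admissible_weight_atoms \<Omega>"
      by (auto simp flip: zero_ereal_def)
    with lt_rule1.prems weight_atoms_closed[OF integer disjI2[OF refl]] show ?case
      by (auto simp: natoms_def)
  next
    case (lt_rule2 r w S)
    then have "S \<noteq> []" "QLt w S \<in> admissible_weight_atoms \<Omega>"
      by (auto simp flip: zero_ereal_def)
    with lt_rule2.prems weight_atoms_closed[OF integer disjI2[OF refl]] show ?case
      by (auto simp: natoms_def lift_elem_atom)
  qed
  then show ?thesis
    unfolding weight_atoms_nn_def by blast
qed

theorem proposition3:
  "\<exists>K::real. \<forall>\<Omega> :: 'a wrule set. finite \<Omega> \<longrightarrow> integer_weights \<Omega> \<longrightarrow>
     finite (weight_atoms_nn \<Omega>) \<and>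
     real (card (weight_atoms_nn \<Omega>))
       \<le> K * (\<Sum>C \<in> constraints_of \<Omega>. (real (wc_length C) + 1) * (wc_weight C + 1))"
proof (intro exI[of _ 2] allI impI)
  fix \<Omega> :: "'a wrule set"
  assume "finite \<Omega>" and integer: "integer_weights \<Omega>"
  let ?A = "admissible_weight_atoms \<Omega>"
  have finite_constraints: "finite (constraints_of \<Omega>)"
    using \<open>finite \<Omega>\<close> by (auto simp: constraints_of_def)
  have nonneg: "\<forall>p \<in> set (wc_expr C). 0 \<le> snd p" if "C \<in> constraints_of \<Omega>" for C
    using integer_weights_Nats[OF integer that] by (auto simp: Nats_altdef2)
  have "finite ?A"
    using finite_constraints card_wc_weight_atoms_le(1)[OF nonneg]
    unfolding admissible_weight_atoms_def by blast
  note subset = weight_atoms_nn_subset[OF integer]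
  have "real (card (weight_atoms_nn \<Omega>)) \<le> real (card ?A)"
    using card_mono[OF \<open>finite ?A\<close> subset] by simp
  also have "\<dots> \<le> (\<Sum>C \<in> constraints_of \<Omega>. real (card (wc_weight_atoms C)))"
    using card_UN_le[OF finite_constraints] unfolding admissible_weight_atoms_def
    by (metis of_nat_le_iff of_nat_sum)
  also have "\<dots> \<le> (\<Sum>C \<in> constraints_of \<Omega>. 2 * ((real (wc_length C) + 1) * (wc_weight C + 1)))"
    by (intro sum_mono card_wc_weight_atoms_le(2) nonneg)
  finally show "finite (weight_atoms_nn \<Omega>) \<and> real (card (weight_atoms_nn \<Omega>))
       \<le> 2 * (\<Sum>C \<in> constraints_of \<Omega>. (real (wc_length C) + 1) * (wc_weight C + 1))"
    using finite_subset[OF subset \<open>finite ?A\<close>] by (simp add: sum_distrib_left)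
qed

end
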